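(* Let $t_0=\{\mathit{MH}\}$ be a trait consisting of a single abstract method header, let $t_1=\{\mathit{Ms}_1\},\dots,t_n=\{\mathit{Ms}_n\}$ be traits, and let $C=t_0+\dots+t_n$ be a class declaration, in a program of the trait calculus described in the context. If $t_0,\dots,t_n$ are well-typed (i.e. $\mathit{Ds};t_i\vdash\mathit{Ds}(t_i):\mathit{OK}$) and the declarations $t_0=\{\mathit{MH}\},t_1=\{\mathit{Ms}_1\},\dots,t_n=\{\mathit{Ms}_n\},C=t_0+\dots+t_n$ flatten to $t_0=\{\mathit{MH}\},t_1=\{\mathit{Ms}_1\},\dots,t_n=\{\mathit{Ms}_n\},C=\mathit{Body}$, then $C=\mathit{Body}$ is well-typed, i.e. $\mathit{Body}$ satisfies the typing-and-verification judgment $\vdash\mathit{Body}:\mathit{OK}$ under name $C$ in the flattened program.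
   Context: Trait calculus (\textsc{TraitCbC}). A program is a list $\mathit{Ds}$ of declarations $\mathit{Name}=E$ (names unique, no circular trait definitions), where $\mathit{Name}$ is a trait name $t$ or class name $C$, and $E::=\mathit{Body}\mid t\mid E+E\mid E[\mathtt{makeAbstract}\ m]$. A body is $\{\mathtt{interface}?\ [\mathit{Cs}]\ \mathit{Ms}\}$ with implemented interfaces $\mathit{Cs}$ and methods $\mathit{Ms}$ with distinct names. A method is $\mathit{MH}\ e?;$ (abstract if $e$ absent) with header $S\ \mathtt{method}\ C\ m(C_1x_1\dots C_nx_n)$; $S$ has precondition $\mathit{Pre}(S)$ and postcondition $\mathit{Post}(S)$ in a parametric logic supporting a commutative, associative conjunction $\&$ and transitive implication $\Rightarrow$. Expressions: $e::=x\mid e.m(e_1\dots e_n)\mid\mathtt{new}\ C(e_1\dots e_n)$; fields are emulated by argument-less abstract methods (getters). The underlying verification is assumed sound and modular. Typing judgment $\Gamma\vdash e:C\dashv P\models P'$ (knowledge $P$, obligation $P'$): variables give $\Gamma\vdash x:\Gamma(x)\dashv\mathtt{result}:\Gamma(x)\&\mathtt{result}=x\models\mathit{true}$; a call $e_0.m(e_1\dots e_n)$ to a method $S\ \mathtt{method}\ C\ m(C_1x_1\dots C_nx_n)$ of $C_0$, with $\Gamma\vdash e_i:C_i\dashv P_i\models P'_i$, fresh $x'_i$ and $S'=S[\mathtt{this}:=x'_0,x_i:=x'_i]$, has type $C$, knowledge $\mathtt{result}:C\&P_0[\mathtt{result}:=x'_0]\&\dots\&P_n[\mathtt{result}:=x'_n]\&(\mathit{Pre}(S')\Rightarrow\mathit{Post}(S'))$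 and obligation $P'_0\&\dots\&P'_n\&\mathit{Pre}(S')$; $\mathtt{new}\ C(e_1\dots e_n)$, with getters $S_i\ \mathtt{method}\ C_i\ x_i()$ of $C$, has type $C$, knowledge $\mathtt{result}:C\&\bigwedge_i(P_i[\mathtt{result}:=x'_i]\&(\mathit{Pre}(S'_i)\Rightarrow\mathtt{result}.x_i()=x'_i))$ and obligation $\bigwedge_iP'_i\&\bigwedge_i\mathit{Pre}(S'_i)$, $S'_i=S_i[\mathtt{this}:=\mathtt{result}]$; subsumption to supertypes. A concrete method $S\ \mathtt{method}\ C\ m(C_1x_1\dots C_nx_n)\ e;$ satisfies $\mathit{Ds};\mathit{Name}\vdash M:\mathit{OK}$ iff, for $\Gamma=\mathtt{this}:\mathit{Name},x_i:C_i$, $\Gamma\vdash e:C\dashv P\models P'$ and the verifier proves $\mathit{Ds}\vdash(\Gamma\&\mathit{Pre}(S)\&P)\models(P'\&\mathit{Post}(S))$; abstract methods are always OK; a body is OK (well-typed) iff all its methods are. Body composition $\{[\mathit{Cs}_1]\mathit{Ms}_1\}+\{[\mathit{Cs}_2]\mathit{Ms}_2\}=\{[\mathit{Cs}_1\cup\mathit{Cs}_2]\mathit{Ms}_1+\mathit{Ms}_2\}$: methods present in only one list are kept; a concrete method (spec $S$) plus an abstract one (spec $S'$) with the same name yields the concrete one if $\mathit{Pre}(S')\Rightarrow\mathit{Pre}(S)$ and $\mathit{Post}(S)\Rightarrow\mathit{Post}(S')$; two abstract methods yield the one with the stronger specification in this sense (the first if it qualifies); otherwise (e.g. two concrete methods)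 composition is undefined. Flattening: $D_1\dots D_n$ flattens to $D'_1\dots D'_n$ if $D'_1\dots D'_n\vdash D_i\Downarrow D'_i$ for all $i$. $\mathit{Ds}\vdash\mathit{Name}=E\Downarrow\mathit{Name}=\mathit{Body}$ if $\mathit{Ds};\mathit{Name}\vdash E\Downarrow\mathit{Body}$ and, when $\mathit{Name}$ is a class, all abstract methods of $\mathit{Body}$ are argument-less getters. Trait expressions flatten as: a body flattens to itself extended by the headers of the interface methods of $\mathit{Cs}$ not already present, provided the result is OK; $t\Downarrow\mathit{Ds}(t)$; $E_1+E_2\Downarrow\mathit{Body}_1+\mathit{Body}_2$ if $E_i\Downarrow\mathit{Body}_i$; $E[\mathtt{makeAbstract}\ m]\Downarrow\mathit{Body}[\mathtt{makeAbstract}\ m]$ (implementation of $m$ removed) if $E\Downarrow\mathit{Body}$. *)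

theory Defs
  imports Main
begin

type_synonym cname = string
type_synonym tname = string
type_synonym mname = string
type_synonym vname = string

datatype name = CN cname | TN tname

text \<open>Variables: this, the special result variable of the logic, ordinary variables.\<close>
datatype var = This | Result | Var vname

datatype expr = EVar var | ECall expr mname "expr list" | ENew cname "expr list"

text \<open>Specifications S (over an arbitrary type 'f of formulas of the parametric logic).\<close>
datatype 'f spec = Spec (pre: 'f) (post: 'f)

text \<open>Method header  S method C m(C1 x1 ... Cn xn)\<close>
datatype 'f mheader =
  MHdr (hspec: "'f spec") (hret: cname) (hname: mname) (hparams: "(cname \<times> vname) list")

text \<open>Method  MH e? ;  (abstract iff the implementation is None)\<close>
datatype 'f meth = Meth (mhdr: "'f mheader") (mimpl: "expr option")

text \<open>Body  { interface? [Cs] Ms }\<close>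
datatype 'f body = Body (bintf: bool) (bintfs: "cname list") (bmeths: "'f meth list")

datatype 'f texpr =
    TBody "'f body"
  | TRef tname
  | TPlus "'f texpr" "'f texpr"
  | TMakeAbstract "'f texpr" mname

type_synonym 'f decl = "name \<times> 'f texpr"
type_synonym 'f prog = "'f decl list"

text \<open>
  A parametric logic: formulas of type 'f with truth, conjunction, implication,
  type assertions (x : Name), equalities (x = y), getter equalities (x.m() = y),
  variable substitution, the logical implication judgement (Ds \<turnstile> P \<Rightarrow> Q)
  and the verifier judgement  Ds \<turnstile> P \<Turnstile> Q.\<close>
record 'f logic =
  ftrue :: 'f
  fand  :: "'f \<Rightarrow> 'f \<Rightarrow> 'f"
  fimp  :: "'f \<Rightarrow> 'f \<Rightarrow> 'f"
  fhas  :: "var \<Rightarrow> name \<Rightarrow> 'f"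
  feq   :: "var \<Rightarrow> var \<Rightarrow> 'f"
  fget  :: "var \<Rightarrow> mname \<Rightarrow> var \<Rightarrow> 'f"
  fren  :: "(var \<Rightarrow> var) \<Rightarrow> 'f \<Rightarrow> 'f"
  fent  :: "'f prog \<Rightarrow> 'f \<Rightarrow> 'f \<Rightarrow> bool"
  fver  :: "'f prog \<Rightarrow> 'f \<Rightarrow> 'f \<Rightarrow> bool"

definition conjs :: "'f logic \<Rightarrow> 'f list \<Rightarrow> 'f" where
  "conjs L Ps = foldr (fand L) Ps (ftrue L)"

definition subst1 :: "var \<Rightarrow> var \<Rightarrow> var \<Rightarrow> var" where
  "subst1 x y = (\<lambda>v. if v = x then y else v)"

definition mnm :: "'f meth \<Rightarrow> mname" where "mnm M = hname (mhdr M)"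
definition mspec :: "'f meth \<Rightarrow> 'f spec" where "mspec M = hspec (mhdr M)"
definition msig :: "'f meth \<Rightarrow> cname \<times> mname \<times> (cname \<times> vname) list" where
  "msig M = (hret (mhdr M), hname (mhdr M), hparams (mhdr M))"

definition body_of :: "'f prog \<Rightarrow> name \<Rightarrow> 'f body option" where
  "body_of Ds N = (case map_of Ds N of Some (TBody B) \<Rightarrow> Some B | _ \<Rightarrow> None)"

definition methods_of :: "'f prog \<Rightarrow> name \<Rightarrow> 'f meth list" where
  "methods_of Ds N = (case body_of Ds N of Some B \<Rightarrow> bmeths B | None \<Rightarrow> [])"

definition mlookup :: "'f prog \<Rightarrow> name \<Rightarrow> mname \<Rightarrow> 'f meth option" where
  "mlookup Ds N m = find (\<lambda>M. mnm M = m) (methods_of Ds N)"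

definition direct_super :: "'f prog \<Rightarrow> name \<Rightarrow> name \<Rightarrow> bool" where
  "direct_super Ds N N' = (\<exists>B. body_of Ds N = Some B \<and> N' \<in> CN ` set (bintfs B))"

definition subtype :: "'f prog \<Rightarrow> name \<Rightarrow> name \<Rightarrow> bool" where
  "subtype Ds = (direct_super Ds)\<^sup>*\<^sup>*"

definition getters :: "'f prog \<Rightarrow> cname \<Rightarrow> 'f meth list" where
  "getters Ds c = filter (\<lambda>M. mimpl M = None \<and> hparams (mhdr M) = []) (methods_of Ds (CN c))"

definition fresh :: "(var \<times> name) list \<Rightarrow> var list \<Rightarrow> bool" where
  "fresh \<Gamma> ys = (distinct ys \<and> (\<forall>y\<in>set ys. y \<noteq> This \<and> y \<noteq> Result \<and> y \<notin> fst ` set \<Gamma>))"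

text \<open>The substitution  [this := x0, x_i := x'_i].\<close>
definition argsub :: "var \<Rightarrow> (cname \<times> vname) list \<Rightarrow> var list \<Rightarrow> var \<Rightarrow> var" where
  "argsub x0 ps xs v = (if v = This then x0 else
     (case map_of (zip (map (\<lambda>p. Var (snd p)) ps) xs) v of Some y \<Rightarrow> y | None \<Rightarrow> v))"

inductive tyj :: "'f logic \<Rightarrow> 'f prog \<Rightarrow> (var \<times> name) list \<Rightarrow> expr \<Rightarrow> name \<Rightarrow> 'f \<Rightarrow> 'f \<Rightarrow> bool"
  for L :: "'f logic" and Ds :: "'f prog"
where
  TVar: "map_of \<Gamma> x = Some N \<Longrightarrow>
    tyj L Ds \<Gamma> (EVar x) N (fand L (fhas L Result N) (feq L Result x)) (ftrue L)"
| TCall: "\<lbrakk> tyj L Ds \<Gamma> e0 N0 P0 Q0;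
    mlookup Ds N0 m = Some M; mhdr M = MHdr S c m ps;
    length es = length ps; length Ps = length ps; length Qs = length ps; length xs = length ps;
    \<forall>i<length ps. tyj L Ds \<Gamma> (es ! i) (CN (fst (ps ! i))) (Ps ! i) (Qs ! i);
    fresh \<Gamma> (x0 # xs) \<rbrakk> \<Longrightarrow>
    tyj L Ds \<Gamma> (ECall e0 m es) (CN c)
      (conjs L ([fhas L Result (CN c), fren L (subst1 Result x0) P0]
                @ map (\<lambda>i. fren L (subst1 Result (xs ! i)) (Ps ! i)) [0..<length ps]
                @ [fimp L (fren L (argsub x0 ps xs) (pre S)) (fren L (argsub x0 ps xs) (post S))]))
      (conjs L ([Q0] @ Qs @ [fren L (argsub x0 ps xs) (pre S)]))"
| TNew: "\<lbrakk> body_of Ds (CN c) = Some B; \<not> bintf B; gs = getters Ds c;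
    length es = length gs; length Ps = length gs; length Qs = length gs; length xs = length gs;
    \<forall>i<length gs. tyj L Ds \<Gamma> (es ! i) (CN (hret (mhdr (gs ! i)))) (Ps ! i) (Qs ! i);
    fresh \<Gamma> xs \<rbrakk> \<Longrightarrow>
    tyj L Ds \<Gamma> (ENew c es) (CN c)
      (conjs L (fhas L Result (CN c) #
         map (\<lambda>i. fand L (fren L (subst1 Result (xs ! i)) (Ps ! i))
                    (fimp L (fren L (subst1 This Result) (pre (mspec (gs ! i))))
                            (fget L Result (mnm (gs ! i)) (xs ! i)))) [0..<length gs]))
      (conjs L (Qs @ map (\<lambda>g. fren L (subst1 This Result) (pre (mspec g))) gs))"
| TSub: "\<lbrakk> tyj L Ds \<Gamma> e N P Q; subtype Ds N N' \<rbrakk> \<Longrightarrow> tyj L Ds \<Gamma> e N' P Q"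

definition gamma_of :: "name \<Rightarrow> 'f mheader \<Rightarrow> (var \<times> name) list" where
  "gamma_of N h = (This, N) # map (\<lambda>(c, x). (Var x, CN c)) (hparams h)"

definition meth_ok :: "'f logic \<Rightarrow> 'f prog \<Rightarrow> name \<Rightarrow> 'f meth \<Rightarrow> bool" where
  "meth_ok L Ds N M = (case mimpl M of
      None \<Rightarrow> True
    | Some e \<Rightarrow> (let h = mhdr M; \<Gamma> = gamma_of N h in
        \<exists>P Q. tyj L Ds \<Gamma> e (CN (hret h)) P Q \<and>
          fver L Ds (fand L (conjs L (map (\<lambda>(x, n). fhas L x n) \<Gamma>)) (fand L (pre (hspec h)) P))
                    (fand L Q (post (hspec h)))))"

definition body_ok :: "'f logic \<Rightarrow> 'f prog \<Rightarrow> name \<Rightarrow> 'f body \<Rightarrow> bool" where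
  "body_ok L Ds N B = (\<forall>M\<in>set (bmeths B). meth_ok L Ds N M)"

definition stronger :: "'f logic \<Rightarrow> 'f prog \<Rightarrow> 'f spec \<Rightarrow> 'f spec \<Rightarrow> bool" where
  "stronger L Ds S S' = (fent L Ds (pre S') (pre S) \<and> fent L Ds (post S) (post S'))"

definition comb :: "'f logic \<Rightarrow> 'f prog \<Rightarrow> 'f meth \<Rightarrow> 'f meth \<Rightarrow> 'f meth option" where
  "comb L Ds M1 M2 = (if msig M1 \<noteq> msig M2 then None else
     (case (mimpl M1, mimpl M2) of
        (Some _, None) \<Rightarrow> (if stronger L Ds (mspec M1) (mspec M2) then Some M1 else None)
      | (None, Some _) \<Rightarrow> (if stronger L Ds (mspec M2) (mspec M1) then Some M2 else None)
      | (None, None) \<Rightarrow> (if stronger L Ds (mspec M1) (mspec M2) then Some M1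
                         else if stronger L Ds (mspec M2) (mspec M1) then Some M2 else None)
      | (Some _, Some _) \<Rightarrow> None))"

definition comp_ms :: "'f logic \<Rightarrow> 'f prog \<Rightarrow> 'f meth list \<Rightarrow> 'f meth list \<Rightarrow> 'f meth list option" where
  "comp_ms L Ds Ms1 Ms2 =
     (case those (map (\<lambda>M. case find (\<lambda>M2. mnm M2 = mnm M) Ms2 of
                               None \<Rightarrow> Some M
                             | Some M2 \<Rightarrow> comb L Ds M M2) Ms1) of
        None \<Rightarrow> None
      | Some Ms \<Rightarrow> Some (Ms @ filter (\<lambda>M. mnm M \<notin> set (map mnm Ms1)) Ms2))"

definition comp_body :: "'f logic \<Rightarrow> 'f prog \<Rightarrow> 'f body \<Rightarrow> 'f body \<Rightarrow> 'f body option" where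
  "comp_body L Ds B1 B2 = (if bintf B1 \<or> bintf B2 then None else
     map_option (Body False (remdups (bintfs B1 @ bintfs B2))) (comp_ms L Ds (bmeths B1) (bmeths B2)))"

definition make_abstract :: "mname \<Rightarrow> 'f body \<Rightarrow> 'f body" where
  "make_abstract m B = Body (bintf B) (bintfs B)
     (map (\<lambda>M. if mnm M = m then Meth (mhdr M) None else M) (bmeths B))"

definition intf_meths :: "'f prog \<Rightarrow> cname list \<Rightarrow> 'f meth list option" where
  "intf_meths Ds Cs = map_option concat (those (map (\<lambda>c. case body_of Ds (CN c) of
       Some B \<Rightarrow> (if bintf B then Some (bmeths B) else None) | None \<Rightarrow> None) Cs))"

fun add_hdrs :: "'f meth list \<Rightarrow> 'f meth list \<Rightarrow> 'f meth list" where
  "add_hdrs Ms [] = Ms"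
| "add_hdrs Ms (M # rest) = (if mnm M \<in> set (map mnm Ms) then add_hdrs Ms rest
                             else add_hdrs (Ms @ [Meth (mhdr M) None]) rest)"

fun flat_e :: "'f logic \<Rightarrow> 'f prog \<Rightarrow> name \<Rightarrow> 'f texpr \<Rightarrow> 'f body option" where
  "flat_e L Ds N (TBody B) = (case intf_meths Ds (bintfs B) of
       None \<Rightarrow> None
     | Some IMs \<Rightarrow> (let B' = Body (bintf B) (bintfs B) (add_hdrs (bmeths B) IMs) in
                    if body_ok L Ds N B' then Some B' else None))"
| "flat_e L Ds N (TRef t) = body_of Ds (TN t)"
| "flat_e L Ds N (TPlus E1 E2) = (case (flat_e L Ds N E1, flat_e L Ds N E2) of
       (Some B1, Some B2) \<Rightarrow> comp_body L Ds B1 B2 | _ \<Rightarrow> None)"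
| "flat_e L Ds N (TMakeAbstract E m) = map_option (make_abstract m) (flat_e L Ds N E)"

definition flat_decl :: "'f logic \<Rightarrow> 'f prog \<Rightarrow> 'f decl \<Rightarrow> 'f decl \<Rightarrow> bool" where
  "flat_decl L Ds' D D' = (fst D' = fst D \<and>
     (\<exists>B. flat_e L Ds' (fst D) (snd D) = Some B \<and> snd D' = TBody B \<and>
          ((\<exists>c. fst D = CN c) \<and> \<not> bintf B \<longrightarrow>
             (\<forall>M\<in>set (bmeths B). mimpl M = None \<longrightarrow> hparams (mhdr M) = []))))"

definition flattens :: "'f logic \<Rightarrow> 'f prog \<Rightarrow> 'f prog \<Rightarrow> bool" where
  "flattens L Ds Ds' = list_all2 (flat_decl L Ds') Ds Ds'"

fun texpr_bodies :: "'f texpr \<Rightarrow> 'f body list" where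
  "texpr_bodies (TBody B) = [B]"
| "texpr_bodies (TRef t) = []"
| "texpr_bodies (TPlus E1 E2) = texpr_bodies E1 @ texpr_bodies E2"
| "texpr_bodies (TMakeAbstract E m) = texpr_bodies E"

fun texpr_refs :: "'f texpr \<Rightarrow> tname list" where
  "texpr_refs (TBody B) = []"
| "texpr_refs (TRef t) = [t]"
| "texpr_refs (TPlus E1 E2) = texpr_refs E1 @ texpr_refs E2"
| "texpr_refs (TMakeAbstract E m) = texpr_refs E"

definition trait_dep :: "'f prog \<Rightarrow> tname \<Rightarrow> tname \<Rightarrow> bool" where
  "trait_dep Ds t t' = (\<exists>E. map_of Ds (TN t) = Some E \<and> t' \<in> set (texpr_refs E))"

definition wf_prog :: "'f prog \<Rightarrow> bool" where
  "wf_prog Ds = (distinct (map fst Ds)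
     \<and> (\<forall>D\<in>set Ds. \<forall>B\<in>set (texpr_bodies (snd D)). distinct (map mnm (bmeths B)))
     \<and> (\<forall>t. \<not> (trait_dep Ds)\<^sup>+\<^sup>+ t t))"

definition refines :: "'f logic \<Rightarrow> 'f prog \<Rightarrow> name \<Rightarrow> name \<Rightarrow> bool" where
  "refines L Ds N N' =
     ((\<forall>M\<in>set (methods_of Ds N'). \<exists>M'. mlookup Ds N (mnm M) = Some M' \<and> msig M' = msig M \<and>
          stronger L Ds (mspec M') (mspec M))
      \<and> (\<forall>N''. direct_super Ds N' N'' \<longrightarrow> subtype Ds N N''))"

definition trait_logic :: "'f logic \<Rightarrow> bool" where
  "trait_logic L = (
     \<comment> \<open>conjunction is commutative and associative\<close>
     (\<forall>P Q. fand L P Q = fand L Q P)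
   \<and> (\<forall>P Q R. fand L (fand L P Q) R = fand L P (fand L Q R))
     \<comment> \<open>logical implication is reflexive and transitive, with the usual rules\<close>
   \<and> (\<forall>Ds P. fent L Ds P P)
   \<and> (\<forall>Ds P Q R. fent L Ds P Q \<longrightarrow> fent L Ds Q R \<longrightarrow> fent L Ds P R)
   \<and> (\<forall>Ds P. fent L Ds P (ftrue L))
   \<and> (\<forall>Ds P Q. fent L Ds (fand L P Q) P)
   \<and> (\<forall>Ds P Q R. fent L Ds R P \<longrightarrow> fent L Ds R Q \<longrightarrow> fent L Ds R (fand L P Q))
   \<and> (\<forall>Ds P P' Q Q'. fent L Ds P' P \<longrightarrow> fent L Ds Q Q' \<longrightarrow> fent L Ds (fimp L P Q) (fimp L P' Q'))
     \<comment> \<open>substitution\<close>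
   \<and> (\<forall>Ds \<sigma> P Q. fent L Ds P Q \<longrightarrow> fent L Ds (fren L \<sigma> P) (fren L \<sigma> Q))
   \<and> (\<forall>\<sigma>. fren L \<sigma> (ftrue L) = ftrue L)
   \<and> (\<forall>\<sigma> P Q. fren L \<sigma> (fand L P Q) = fand L (fren L \<sigma> P) (fren L \<sigma> Q))
   \<and> (\<forall>\<sigma> P Q. fren L \<sigma> (fimp L P Q) = fimp L (fren L \<sigma> P) (fren L \<sigma> Q))
   \<and> (\<forall>\<sigma> x N. fren L \<sigma> (fhas L x N) = fhas L (\<sigma> x) N)
   \<and> (\<forall>\<sigma> x y. fren L \<sigma> (feq L x y) = feq L (\<sigma> x) (\<sigma> y))
   \<and> (\<forall>\<sigma> x m y. fren L \<sigma> (fget L x m y) = fget L (\<sigma> x) m (\<sigma> y))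
     \<comment> \<open>modularity: a type assertion only conveys the offered method contracts\<close>
   \<and> (\<forall>Ds N N' x. refines L Ds N N' \<longrightarrow> fent L Ds (fhas L x N) (fhas L x N'))
     \<comment> \<open>the verifier is closed under logical consequence\<close>
   \<and> (\<forall>Ds A A' B B'. fver L Ds A B \<longrightarrow> fent L Ds A' A \<longrightarrow> fent L Ds B B' \<longrightarrow> fver L Ds A' B'))"

end

theory Submission
  imports Defs
begin

text \<open>
  Composing traits keeps, for every method name, one of the operands' methods, namely one whose
  specification is at least as strong as that of every other operand's method of that name.
  Hence the flattened class C offers every method of every t_i with the same signature and a
  stronger specification: C refines t_i, and since the t_i implement no interfaces they have no
  other supertypes. A typing derivation of a method body under this : t_i can therefore be
  replayed under this : C. A type assertion for C entails the one for t_i, and the methods of C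
  called on this have weaker preconditions and stronger postconditions, so the knowledge only
  grows and the obligations only shrink; as the verifier is closed under logical consequence,
  the verification condition established for t_i yields the one required for C.
\<close>

lemma those_eq_Some_list_all2: "those xs = Some ys \<Longrightarrow> list_all2 (\<lambda>x y. x = Some y) xs ys"
  by (induction xs arbitrary: ys) (auto split: option.splits)

lemma list_all2_ex_right: "list_all2 P xs ys \<Longrightarrow> x \<in> set xs \<Longrightarrow> \<exists>y\<in>set ys. P x y"
  by (induction rule: list_all2_induct) auto

lemma find_SomeD: "find P xs = Some x \<Longrightarrow> x \<in> set xs \<and> P x"
  by (auto simp: find_Some_iff)

lemma list_choice_pair:
  assumes "\<forall>i<n. \<exists>P Q. R i P Q"
  obtains Ps Qs where "length Ps = n" "length Qs = n" "\<forall>i<n. R i (Ps ! i) (Qs ! i)"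
proof -
  define pq where "pq i = (SOME pq. R i (fst pq) (snd pq))" for i
  have "\<forall>i<n. R i (fst (pq i)) (snd (pq i))"
    using assms unfolding pq_def by (metis (mono_tags) fst_conv snd_conv someI_ex)
  then show thesis
    by (intro that[of "map (fst \<circ> pq) [0..<n]" "map (snd \<circ> pq) [0..<n]"]) auto
qed

lemma msig_mnm: "msig M' = msig M \<Longrightarrow> mnm M' = mnm M"
  by (simp add: msig_def mnm_def)

lemma find_mnm_distinct:
  "distinct (map mnm Ms) \<Longrightarrow> M \<in> set Ms \<Longrightarrow> find (\<lambda>M'. mnm M' = mnm M) Ms = Some M"
  by (induction Ms) auto

lemma methods_of_TBody: "map_of Ds N = Some (TBody B) \<Longrightarrow> methods_of Ds N = bmeths B"
  by (simp add: methods_of_def body_of_def)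

lemma wf_prog_distinct_mnm:
  "wf_prog Ds \<Longrightarrow> map_of Ds N = Some (TBody B) \<Longrightarrow> distinct (map mnm (bmeths B))"
  unfolding wf_prog_def by (fastforce dest: map_of_SomeD)

lemma flattens_map_of:
  assumes "flattens L Ds Ds'" "distinct (map fst Ds)"
    and "map_of Ds N = Some E" "map_of Ds' N = Some (TBody B)"
  shows "flat_e L Ds' N E = Some B"
proof -
  have decls: "list_all2 (flat_decl L Ds') Ds Ds'"
    using assms(1) by (simp add: flattens_def)
  then have "map fst Ds' = map fst Ds"
    by (induction rule: list_all2_induct) (auto simp: flat_decl_def)
  then have distinct': "distinct (map fst Ds')"
    using assms(2) by simp
  obtain D' where "D' \<in> set Ds'" "flat_decl L Ds' (N, E) D'"
    using list_all2_ex_right[OF decls map_of_SomeD[OF assms(3)]] by blast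
  then obtain B' where B': "flat_e L Ds' N E = Some B'" "D' = (N, TBody B')"
    by (auto simp: flat_decl_def prod_eq_iff)
  with \<open>D' \<in> set Ds'\<close> have "map_of Ds' N = Some (TBody B')"
    using distinct' by simp
  with B'(1) assms(4) show ?thesis
    by simp
qed

definition plain_trait :: "'f prog \<Rightarrow> tname \<Rightarrow> bool" where
  "plain_trait Ds t \<longleftrightarrow>
     body_of Ds (TN t) = Some (Body False [] (methods_of Ds (TN t)))
     \<and> distinct (map mnm (methods_of Ds (TN t)))"

lemma plain_traitI:
  "map_of Ds (TN t) = Some (TBody (Body False [] Ms)) \<Longrightarrow> distinct (map mnm Ms) \<Longrightarrow>
   plain_trait Ds t"
  by (simp add: plain_trait_def methods_of_def body_of_def)

lemma subtype_from_plain_trait: "plain_trait Ds t \<Longrightarrow> subtype Ds (TN t) N \<Longrightarrow> N = TN t"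
  unfolding subtype_def plain_trait_def
  by (erule converse_rtranclpE) (auto simp: direct_super_def)

lemma subtype_to_trait: "subtype Ds N (TN t) \<Longrightarrow> N = TN t"
  unfolding subtype_def by (erule rtranclp.cases) (auto simp: direct_super_def)

definition refined_in :: "'f logic \<Rightarrow> 'f prog \<Rightarrow> 'f meth list \<Rightarrow> 'f meth \<Rightarrow> bool" where
  "refined_in L Ds Ms M \<longleftrightarrow>
     (\<exists>M'\<in>set Ms. msig M' = msig M \<and> stronger L Ds (mspec M') (mspec M))"

definition merges :: "'f logic \<Rightarrow> 'f prog \<Rightarrow> 'f meth list list \<Rightarrow> 'f meth list \<Rightarrow> bool" where
  "merges L Ds Mss Ms \<longleftrightarrow>
     distinct (map mnm Ms) \<and> set Ms \<subseteq> (\<Union>Ms'\<in>set Mss. set Ms')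
     \<and> (\<forall>Ms'\<in>set Mss. \<forall>M\<in>set Ms'. refined_in L Ds Ms M)"

definition comp_pick :: "'f logic \<Rightarrow> 'f prog \<Rightarrow> 'f meth list \<Rightarrow> 'f meth \<Rightarrow> 'f meth option" where
  "comp_pick L Ds Ms2 M = (case find (\<lambda>M2. mnm M2 = mnm M) Ms2 of
     None \<Rightarrow> Some M | Some M2 \<Rightarrow> comb L Ds M M2)"

lemma comp_ms_SomeE:
  assumes "comp_ms L Ds Ms1 Ms2 = Some Ms"
  obtains Rs where "list_all2 (\<lambda>M R. comp_pick L Ds Ms2 M = Some R) Ms1 Rs"
    and "Ms = Rs @ filter (\<lambda>M. mnm M \<notin> set (map mnm Ms1)) Ms2"
proof -
  obtain Rs where "those (map (comp_pick L Ds Ms2) Ms1) = Some Rs"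
    and Ms: "Ms = Rs @ filter (\<lambda>M. mnm M \<notin> set (map mnm Ms1)) Ms2"
    using assms unfolding comp_ms_def comp_pick_def by (auto split: option.splits)
  then have "list_all2 (\<lambda>M R. comp_pick L Ds Ms2 M = Some R) Ms1 Rs"
    using those_eq_Some_list_all2 by (fastforce simp: list_all2_map1)
  then show thesis
    using that Ms by blast
qed

lemma refines_trait:
  assumes "body_of Ds (CN C) = Some B" "distinct (map mnm (bmeths B))" "plain_trait Ds t"
    and "\<forall>M\<in>set (methods_of Ds (TN t)). refined_in L Ds (bmeths B) M"
  shows "refines L Ds (CN C) (TN t)"
  unfolding refines_def
proof (intro conjI ballI allI impI)
  fix M assume "M \<in> set (methods_of Ds (TN t))"
  then obtain M' where M': "M' \<in> set (bmeths B)" "msig M' = msig M" "stronger L Ds (mspec M') (mspec M)"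
    using assms(4) by (auto simp: refined_in_def)
  then have "mlookup Ds (CN C) (mnm M) = Some M'"
    using find_mnm_distinct[OF assms(2) M'(1)] assms(1) msig_mnm[OF M'(2)]
    by (simp add: mlookup_def methods_of_def)
  with M' show "\<exists>M'. mlookup Ds (CN C) (mnm M) = Some M' \<and> msig M' = msig M
      \<and> stronger L Ds (mspec M') (mspec M)"
    by blast
next
  fix N assume "direct_super Ds (TN t) N"
  then show "subtype Ds (CN C) N"
    using assms(3) by (simp add: direct_super_def plain_trait_def)
qed

lemma refines_mlookup:
  assumes "refines L Ds N N'" "mlookup Ds N' m = Some M"
  obtains M' where "mlookup Ds N m = Some M'" "msig M' = msig M" "stronger L Ds (mspec M') (mspec M)"
proof -
  have "M \<in> set (methods_of Ds N')" "mnm M = m"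
    using find_SomeD[of _ _ M] assms(2) by (auto simp: mlookup_def)
  then show thesis
    using assms(1) that unfolding refines_def by blast
qed

definition call_knowledge ::
  "'f logic \<Rightarrow> cname \<Rightarrow> var \<Rightarrow> var list \<Rightarrow> (cname \<times> vname) list \<Rightarrow> 'f \<Rightarrow> 'f list \<Rightarrow> 'f spec \<Rightarrow> 'f"
where
  "call_knowledge L c x0 xs ps P0 Ps S =
     conjs L ([fhas L Result (CN c), fren L (subst1 Result x0) P0]
       @ map (\<lambda>i. fren L (subst1 Result (xs ! i)) (Ps ! i)) [0..<length ps]
       @ [fimp L (fren L (argsub x0 ps xs) (pre S)) (fren L (argsub x0 ps xs) (post S))])"

definition call_obligation ::
  "'f logic \<Rightarrow> var \<Rightarrow> var list \<Rightarrow> (cname \<times> vname) list \<Rightarrow> 'f \<Rightarrow> 'f list \<Rightarrow> 'f spec \<Rightarrow> 'f"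
where
  "call_obligation L x0 xs ps Q0 Qs S = conjs L ([Q0] @ Qs @ [fren L (argsub x0 ps xs) (pre S)])"

definition new_knowledge :: "'f logic \<Rightarrow> cname \<Rightarrow> 'f meth list \<Rightarrow> var list \<Rightarrow> 'f list \<Rightarrow> 'f" where
  "new_knowledge L c gs xs Ps =
     conjs L (fhas L Result (CN c) #
       map (\<lambda>i. fand L (fren L (subst1 Result (xs ! i)) (Ps ! i))
                  (fimp L (fren L (subst1 This Result) (pre (mspec (gs ! i))))
                          (fget L Result (mnm (gs ! i)) (xs ! i)))) [0..<length gs])"

definition new_obligation :: "'f logic \<Rightarrow> 'f meth list \<Rightarrow> 'f list \<Rightarrow> 'f" where
  "new_obligation L gs Qs = conjs L (Qs @ map (\<lambda>g. fren L (subst1 This Result) (pre (mspec g))) gs)"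

lemmas tyj_call = tyj.TCall[folded call_knowledge_def call_obligation_def]
lemmas tyj_new = tyj.TNew[folded new_knowledge_def new_obligation_def]

context
  fixes L :: "'f logic"
  assumes logic: "trait_logic L"
begin

lemma ent_refl: "fent L Ds P P"
  using logic unfolding trait_logic_def by metis

lemma ent_trans: "fent L Ds P Q \<Longrightarrow> fent L Ds Q R \<Longrightarrow> fent L Ds P R"
  using logic unfolding trait_logic_def by metis

lemma ent_conjunct1: "fent L Ds (fand L P Q) P"
  using logic unfolding trait_logic_def by metis

lemma ent_conjunct2: "fent L Ds (fand L P Q) Q"
proof -
  have "fand L P Q = fand L Q P"
    using logic unfolding trait_logic_def by metis
  then show ?thesis
    using ent_conjunct1 by metis
qed

lemma ent_conjI: "fent L Ds R P \<Longrightarrow> fent L Ds R Q \<Longrightarrow> fent L Ds R (fand L P Q)"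
  using logic unfolding trait_logic_def by metis

lemma ent_and_mono: "fent L Ds A A' \<Longrightarrow> fent L Ds B B' \<Longrightarrow> fent L Ds (fand L A B) (fand L A' B')"
  by (meson ent_conjI ent_conjunct1 ent_conjunct2 ent_trans)

lemma ent_imp_mono: "fent L Ds P' P \<Longrightarrow> fent L Ds Q Q' \<Longrightarrow> fent L Ds (fimp L P Q) (fimp L P' Q')"
  using logic unfolding trait_logic_def by metis

lemma ent_ren: "fent L Ds P Q \<Longrightarrow> fent L Ds (fren L \<sigma> P) (fren L \<sigma> Q)"
  using logic unfolding trait_logic_def by metis

lemma ent_refines: "refines L Ds N N' \<Longrightarrow> fent L Ds (fhas L x N) (fhas L x N')"
  using logic unfolding trait_logic_def by metis

lemma fver_mono: "fver L Ds A B \<Longrightarrow> fent L Ds A' A \<Longrightarrow> fent L Ds B B' \<Longrightarrow> fver L Ds A' B'"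
  using logic unfolding trait_logic_def by metis

lemma conjs_mono: "list_all2 (fent L Ds) As As' \<Longrightarrow> fent L Ds (conjs L As) (conjs L As')"
  by (induction rule: list_all2_induct) (simp_all add: conjs_def ent_refl ent_and_mono)

lemma call_knowledge_mono:
  assumes "fent L Ds P0' P0" "\<forall>i<length ps. fent L Ds (Ps' ! i) (Ps ! i)" "stronger L Ds S' S"
  shows "fent L Ds (call_knowledge L c x0 xs ps P0' Ps' S') (call_knowledge L c x0 xs ps P0 Ps S)"
  unfolding call_knowledge_def using assms
  by (intro conjs_mono list_all2_appendI)
    (simp_all add: list_all2_map1 list_all2_map2 list_all2_same stronger_def ent_refl ent_ren ent_imp_mono)

lemma call_obligation_mono:
  assumes "fent L Ds Q0 Q0'" "list_all2 (fent L Ds) Qs Qs'" "stronger L Ds S' S"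
  shows "fent L Ds (call_obligation L x0 xs ps Q0 Qs S) (call_obligation L x0 xs ps Q0' Qs' S')"
  unfolding call_obligation_def using assms
  by (intro conjs_mono list_all2_appendI) (simp_all add: stronger_def ent_ren)

lemma new_knowledge_mono:
  assumes "\<forall>i<length gs. fent L Ds (Ps' ! i) (Ps ! i)"
  shows "fent L Ds (new_knowledge L c gs xs Ps') (new_knowledge L c gs xs Ps)"
  unfolding new_knowledge_def using assms
  by (intro conjs_mono) (simp add: list_all2_map1 list_all2_map2 list_all2_same ent_refl ent_ren ent_and_mono)

lemma new_obligation_mono:
  "list_all2 (fent L Ds) Qs Qs' \<Longrightarrow> fent L Ds (new_obligation L gs Qs) (new_obligation L gs Qs')"
  unfolding new_obligation_def
  by (intro conjs_mono list_all2_appendI) (simp_all add: list_all2_same ent_refl)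

lemma stronger_refl: "stronger L Ds S S"
  by (simp add: stronger_def ent_refl)

lemma stronger_trans: "stronger L Ds S1 S2 \<Longrightarrow> stronger L Ds S2 S3 \<Longrightarrow> stronger L Ds S1 S3"
  unfolding stronger_def by (meson ent_trans)

lemma refined_in_refl: "M \<in> set Ms \<Longrightarrow> refined_in L Ds Ms M"
  using stronger_refl by (auto simp: refined_in_def)

lemma refined_in_trans:
  "refined_in L Ds Ms M \<Longrightarrow> \<forall>M'\<in>set Ms. refined_in L Ds Ms' M' \<Longrightarrow> refined_in L Ds Ms' M"
  unfolding refined_in_def by (metis stronger_trans)

lemma comb_SomeD:
  assumes "comb L Ds M1 M2 = Some R"
  shows "msig R = msig M1" "msig R = msig M2" "R = M1 \<or> R = M2"
    "stronger L Ds (mspec R) (mspec M1)" "stronger L Ds (mspec R) (mspec M2)"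
  using assms stronger_refl by (auto simp: comb_def split: option.splits if_splits)

lemma comp_pick_SomeD:
  assumes "comp_pick L Ds Ms2 M = Some R"
  shows "msig R = msig M \<and> (R = M \<or> R \<in> set Ms2) \<and> stronger L Ds (mspec R) (mspec M)"
proof (cases "find (\<lambda>M2. mnm M2 = mnm M) Ms2")
  case None
  then show ?thesis
    using assms stronger_refl by (simp add: comp_pick_def)
next
  case (Some M2)
  then have comb: "comb L Ds M M2 = Some R" and "M2 \<in> set Ms2"
    using assms find_SomeD[OF Some] by (auto simp: comp_pick_def)
  then show ?thesis
    using comb_SomeD[OF comb] by auto
qed

lemma comp_pick_refines_right:
  assumes "distinct (map mnm Ms2)" "M2 \<in> set Ms2" "mnm M = mnm M2"
    and "comp_pick L Ds Ms2 M = Some R"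
  shows "msig R = msig M2" "stronger L Ds (mspec R) (mspec M2)"
proof -
  have "comb L Ds M M2 = Some R"
    using assms find_mnm_distinct[OF assms(1,2)] by (simp add: comp_pick_def)
  then show "msig R = msig M2" "stronger L Ds (mspec R) (mspec M2)"
    by (rule comb_SomeD)+
qed

lemma comp_ms_merges:
  assumes "comp_ms L Ds Ms1 Ms2 = Some Ms"
    and distinct1: "distinct (map mnm Ms1)" and distinct2: "distinct (map mnm Ms2)"
  shows "merges L Ds [Ms1, Ms2] Ms"
proof -
  obtain Rs where picks: "list_all2 (\<lambda>M R. comp_pick L Ds Ms2 M = Some R) Ms1 Rs"
    and Ms: "Ms = Rs @ filter (\<lambda>M. mnm M \<notin> set (map mnm Ms1)) Ms2"
    using comp_ms_SomeE[OF assms(1)] by blast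
  have "map mnm Rs = map mnm Ms1"
    using picks by (induction rule: list_all2_induct) (auto dest!: comp_pick_SomeD msig_mnm)
  then have distinct: "distinct (map mnm Ms)"
    using distinct1 distinct2 unfolding Ms by (auto simp: distinct_map_filter) (metis imageI)
  have "set Rs \<subseteq> set Ms1 \<union> set Ms2"
    using picks by (induction rule: list_all2_induct) (auto dest!: comp_pick_SomeD)
  then have subset: "set Ms \<subseteq> set Ms1 \<union> set Ms2"
    unfolding Ms by auto
  have refined1: "refined_in L Ds Ms M" if "M \<in> set Ms1" for M
    using list_all2_ex_right[OF picks that] comp_pick_SomeD
    unfolding Ms refined_in_def by fastforce
  have refined2: "refined_in L Ds Ms M" if M: "M \<in> set Ms2" for M
  proof (cases "mnm M \<in> set (map mnm Ms1)")
    case False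
    then show ?thesis
      using M refined_in_refl unfolding Ms by auto
  next
    case True
    then obtain M1 where M1: "M1 \<in> set Ms1" "mnm M1 = mnm M"
      by auto
    then obtain R where R: "R \<in> set Rs" "comp_pick L Ds Ms2 M1 = Some R"
      using list_all2_ex_right[OF picks] by blast
    then show ?thesis
      using comp_pick_refines_right[OF distinct2 M M1(2) R(2)] unfolding Ms refined_in_def by auto
  qed
  show ?thesis
    using distinct subset refined1 refined2 by (auto simp: merges_def)
qed

lemma merges_append:
  assumes "merges L Ds Mss Ms1" "merges L Ds [Ms1, Ms2] Ms"
  shows "merges L Ds (Mss @ [Ms2]) Ms"
  using assms refined_in_trans unfolding merges_def by auto blast

lemma flat_e_trait_sum:
  assumes "flat_e L Ds N (foldl TPlus (TRef t0) (map TRef ts)) = Some B"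
    and "\<forall>t\<in>set (t0 # ts). plain_trait Ds t"
  shows "B = Body False [] (bmeths B)
    \<and> merges L Ds (map (\<lambda>t. methods_of Ds (TN t)) (t0 # ts)) (bmeths B)"
  using assms
proof (induction ts arbitrary: B rule: rev_induct)
  case Nil
  then show ?case
    using refined_in_refl by (auto simp: plain_trait_def merges_def)
next
  case (snoc t ts)
  have t: "body_of Ds (TN t) = Some (Body False [] (methods_of Ds (TN t)))"
    "distinct (map mnm (methods_of Ds (TN t)))"
    using snoc.prems(2) by (auto simp: plain_trait_def)
  from snoc.prems(1) t(1) obtain B1 where B1: "flat_e L Ds N (foldl TPlus (TRef t0) (map TRef ts)) = Some B1"
    and comp: "comp_body L Ds B1 (Body False [] (methods_of Ds (TN t))) = Some B"
    by (auto split: option.splits)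
  have IH: "B1 = Body False [] (bmeths B1)"
    "merges L Ds (map (\<lambda>t. methods_of Ds (TN t)) (t0 # ts)) (bmeths B1)"
    using snoc.IH[OF B1] snoc.prems(2) by auto
  from comp obtain Ms where Ms: "comp_ms L Ds (bmeths B1) (methods_of Ds (TN t)) = Some Ms"
    and B: "B = Body False [] Ms"
    by (subst (asm) IH(1)) (auto simp: comp_body_def)
  have "merges L Ds [bmeths B1, methods_of Ds (TN t)] Ms"
    using comp_ms_merges[OF Ms] IH(2) t(2) by (simp add: merges_def)
  then show ?case
    using merges_append[OF IH(2)] B by simp
qed

context
  fixes Ds :: "'f prog" and C :: cname and t :: tname
  assumes refines: "refines L Ds (CN C) (TN t)" and plain: "plain_trait Ds t"
begin

lemma map_of_refine_this:
  assumes "map_of ((This, TN t) # \<Gamma>0) x = Some N" "TN t \<notin> snd ` set \<Gamma>0"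
  shows "map_of ((This, CN C) # \<Gamma>0) x = Some (if N = TN t then CN C else N)"
proof (cases "x = This")
  case False
  then have "map_of \<Gamma>0 x = Some N"
    using assms(1) by simp
  then show ?thesis
    using False assms(2) by (force dest: map_of_SomeD)
qed (use assms in auto)

lemma subtype_refine_this:
  "subtype Ds N N' \<Longrightarrow> subtype Ds (if N = TN t then CN C else N) (if N' = TN t then CN C else N')"
proof (cases "N = TN t")
  case True
  assume "subtype Ds N N'"
  with True have "N' = TN t"
    using subtype_from_plain_trait[OF plain] by simp
  with True show ?thesis
    by (simp add: subtype_def)
qed (use subtype_to_trait in fastforce)

lemma mlookup_refine_this:
  assumes "mlookup Ds N m = Some M" "mhdr M = MHdr S c m ps"
  obtains M' S' where "mlookup Ds (if N = TN t then CN C else N) m = Some M'"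
    and "mhdr M' = MHdr S' c m ps" "stronger L Ds S' S"
proof (cases "N = TN t")
  case True
  obtain M' where "mlookup Ds (CN C) m = Some M'" "msig M' = msig M" "stronger L Ds (mspec M') (mspec M)"
    using refines_mlookup[OF refines] assms(1) True by blast
  then show thesis
    using that True assms(2) by (cases "mhdr M'") (auto simp: msig_def mspec_def)
qed (use that assms stronger_refl in auto)

lemma tyj_refine_this:
  "tyj L Ds \<Gamma> e N P Q \<Longrightarrow> \<Gamma> = (This, TN t) # \<Gamma>0 \<Longrightarrow> TN t \<notin> snd ` set \<Gamma>0 \<Longrightarrow>
   \<exists>P' Q'. tyj L Ds ((This, CN C) # \<Gamma>0) e (if N = TN t then CN C else N) P' Q'
     \<and> fent L Ds P' P \<and> fent L Ds Q Q'"
proof (induction rule: tyj.induct)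
  case (TVar \<Gamma> x N)
  let ?N' = "if N = TN t then CN C else N"
  have "tyj L Ds ((This, CN C) # \<Gamma>0) (EVar x) ?N'
      (fand L (fhas L Result ?N') (feq L Result x)) (ftrue L)"
    using TVar map_of_refine_this by (intro tyj.TVar) simp
  moreover have "fent L Ds (fand L (fhas L Result ?N') (feq L Result x))
      (fand L (fhas L Result N) (feq L Result x))"
    using ent_and_mono ent_refines[OF refines] ent_refl by simp
  ultimately show ?case
    using ent_refl by blast
next
  case (TSub \<Gamma> e N P Q N')
  then obtain P' Q' where "tyj L Ds ((This, CN C) # \<Gamma>0) e (if N = TN t then CN C else N) P' Q'"
    and "fent L Ds P' P" "fent L Ds Q Q'"
    by blast
  moreover have "subtype Ds (if N = TN t then CN C else N) (if N' = TN t then CN C else N')"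
    using subtype_refine_this TSub.hyps(2) .
  ultimately show ?case
    by (meson tyj.TSub)
next
  case (TCall \<Gamma> e0 N0 P0 Q0 m M S c ps es Ps Qs xs x0)
  let ?\<Gamma>' = "(This, CN C) # \<Gamma>0"
  obtain P0' Q0' where e0: "tyj L Ds ?\<Gamma>' e0 (if N0 = TN t then CN C else N0) P0' Q0'"
    and P0': "fent L Ds P0' P0" and Q0': "fent L Ds Q0 Q0'"
    using TCall.IH TCall.prems by blast
  have "\<forall>i<length ps. \<exists>P' Q'. tyj L Ds ?\<Gamma>' (es ! i) (CN (fst (ps ! i))) P' Q'
      \<and> fent L Ds P' (Ps ! i) \<and> fent L Ds (Qs ! i) Q'"
    using TCall.IH(2) TCall.prems by fastforce
  then obtain Ps' Qs' where lens: "length Ps' = length ps" "length Qs' = length ps"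
    and args: "\<forall>i<length ps. tyj L Ds ?\<Gamma>' (es ! i) (CN (fst (ps ! i))) (Ps' ! i) (Qs' ! i)
      \<and> fent L Ds (Ps' ! i) (Ps ! i) \<and> fent L Ds (Qs ! i) (Qs' ! i)"
    by (rule list_choice_pair)
  obtain M' S' where M': "mlookup Ds (if N0 = TN t then CN C else N0) m = Some M'"
    "mhdr M' = MHdr S' c m ps" and S': "stronger L Ds S' S"
    using mlookup_refine_this TCall.hyps(2,3) by blast
  moreover have "fresh ?\<Gamma>' (x0 # xs)"
    using TCall.hyps(8) TCall.prems(1) by (simp add: fresh_def)
  ultimately have "tyj L Ds ?\<Gamma>' (ECall e0 m es) (CN c)
      (call_knowledge L c x0 xs ps P0' Ps' S') (call_obligation L x0 xs ps Q0' Qs' S')"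
    using args by (intro tyj_call[OF e0 M' TCall.hyps(4) lens TCall.hyps(7)]) auto
  moreover have "fent L Ds (call_knowledge L c x0 xs ps P0' Ps' S') (call_knowledge L c x0 xs ps P0 Ps S)"
    using P0' args S' by (intro call_knowledge_mono) auto
  moreover have "fent L Ds (call_obligation L x0 xs ps Q0 Qs S) (call_obligation L x0 xs ps Q0' Qs' S')"
    using Q0' args S' lens TCall.hyps(6)
    by (intro call_obligation_mono) (auto simp: list_all2_conv_all_nth)
  ultimately show ?case
    unfolding call_knowledge_def call_obligation_def by auto
next
  case (TNew c B gs es Ps Qs xs \<Gamma>)
  let ?\<Gamma>' = "(This, CN C) # \<Gamma>0"
  have "\<forall>i<length gs. \<exists>P' Q'. tyj L Ds ?\<Gamma>' (es ! i) (CN (hret (mhdr (gs ! i)))) P' Q'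
      \<and> fent L Ds P' (Ps ! i) \<and> fent L Ds (Qs ! i) Q'"
    using TNew.IH TNew.prems by fastforce
  then obtain Ps' Qs' where lens: "length Ps' = length gs" "length Qs' = length gs"
    and args: "\<forall>i<length gs. tyj L Ds ?\<Gamma>' (es ! i) (CN (hret (mhdr (gs ! i)))) (Ps' ! i) (Qs' ! i)
      \<and> fent L Ds (Ps' ! i) (Ps ! i) \<and> fent L Ds (Qs ! i) (Qs' ! i)"
    by (rule list_choice_pair)
  have "fresh ?\<Gamma>' xs"
    using TNew.hyps(8) TNew.prems(1) by (simp add: fresh_def)
  then have "tyj L Ds ?\<Gamma>' (ENew c es) (CN c) (new_knowledge L c gs xs Ps') (new_obligation L gs Qs')"
    using args by (intro tyj_new[OF TNew.hyps(1-4) lens TNew.hyps(7)]) auto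
  moreover have "fent L Ds (new_knowledge L c gs xs Ps') (new_knowledge L c gs xs Ps)"
    using args by (intro new_knowledge_mono) auto
  moreover have "fent L Ds (new_obligation L gs Qs) (new_obligation L gs Qs')"
    using args lens TNew.hyps(6) by (intro new_obligation_mono) (auto simp: list_all2_conv_all_nth)
  ultimately show ?case
    unfolding new_knowledge_def new_obligation_def by auto
qed

lemma meth_ok_refine_this:
  assumes ok: "meth_ok L Ds (TN t) M"
  shows "meth_ok L Ds (CN C) M"
proof (cases "mimpl M")
  case None
  then show ?thesis
    by (simp add: meth_ok_def)
next
  case (Some e)
  define h where "h = mhdr M"
  define \<Gamma>0 where "\<Gamma>0 = map (\<lambda>(c, x). (Var x, CN c)) (hparams h)"
  let ?has = "\<lambda>\<Gamma>. conjs L (map (\<lambda>(x, n). fhas L x n) \<Gamma>)"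
  have \<Gamma>: "gamma_of (TN t) h = (This, TN t) # \<Gamma>0" "gamma_of (CN C) h = (This, CN C) # \<Gamma>0"
    by (simp_all add: gamma_of_def \<Gamma>0_def)
  from ok Some obtain P Q where
    typed: "tyj L Ds ((This, TN t) # \<Gamma>0) e (CN (hret h)) P Q" and
    verified: "fver L Ds (fand L (?has ((This, TN t) # \<Gamma>0)) (fand L (pre (hspec h)) P))
      (fand L Q (post (hspec h)))"
    unfolding meth_ok_def Let_def \<Gamma>(1)[symmetric] h_def by auto
  have "TN t \<notin> snd ` set \<Gamma>0"
    by (auto simp: \<Gamma>0_def)
  then obtain P' Q' where typed': "tyj L Ds ((This, CN C) # \<Gamma>0) e (CN (hret h)) P' Q'"
    and "fent L Ds P' P" "fent L Ds Q Q'"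
    using tyj_refine_this[OF typed refl] by auto
  moreover have "fent L Ds (?has ((This, CN C) # \<Gamma>0)) (?has ((This, TN t) # \<Gamma>0))"
    by (intro conjs_mono) (simp add: ent_refines[OF refines] list_all2_same ent_refl)
  ultimately have "fver L Ds (fand L (?has ((This, CN C) # \<Gamma>0)) (fand L (pre (hspec h)) P'))
      (fand L Q' (post (hspec h)))"
    using verified by (meson fver_mono ent_and_mono ent_refl)
  then show ?thesis
    using typed' Some unfolding meth_ok_def Let_def \<Gamma>(2)[symmetric] h_def by auto
qed

end

lemma body_ok_merge:
  assumes "body_of Ds (CN C) = Some B"
    and "merges L Ds (map (\<lambda>t. methods_of Ds (TN t)) ts) (bmeths B)"
    and "\<forall>t\<in>set ts. plain_trait Ds t \<and> body_ok L Ds (TN t) (Body False [] (methods_of Ds (TN t)))"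
  shows "body_ok L Ds (CN C) B"
  unfolding body_ok_def
proof
  fix M assume "M \<in> set (bmeths B)"
  then obtain t where t: "t \<in> set ts" "M \<in> set (methods_of Ds (TN t))"
    using assms(2) by (auto simp: merges_def)
  then have "refines L Ds (CN C) (TN t)"
    using refines_trait[OF assms(1)] assms(2,3) by (auto simp: merges_def)
  moreover have "meth_ok L Ds (TN t) M"
    using t assms(3) by (auto simp: body_ok_def)
  ultimately show "meth_ok L Ds (CN C) M"
    using meth_ok_refine_this assms(3) t(1) by blast
qed

end

theorem theorem4p9:
  fixes L :: "'f logic" and Ds Ds' :: "'f prog"
    and t0 :: tname and MH :: "'f mheader" and ts :: "tname list" and Mss :: "'f meth list list"
    and C :: cname and B :: "'f body"
  assumes logic: "trait_logic L"
    and wf: "wf_prog Ds"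
    and len: "length Mss = length ts"
    and D_t0: "map_of Ds (TN t0) = Some (TBody (Body False [] [Meth MH None]))"
    and D_ts: "\<forall>i<length ts. map_of Ds (TN (ts ! i)) = Some (TBody (Body False [] (Mss ! i)))"
    and D_C: "map_of Ds (CN C) = Some (foldl TPlus (TRef t0) (map TRef ts))"
    and flat: "flattens L Ds Ds'"
    and F_t0: "map_of Ds' (TN t0) = Some (TBody (Body False [] [Meth MH None]))"
    and F_ts: "\<forall>i<length ts. map_of Ds' (TN (ts ! i)) = Some (TBody (Body False [] (Mss ! i)))"
    and F_C: "map_of Ds' (CN C) = Some (TBody B)"
    and ok_t0: "body_ok L Ds' (TN t0) (Body False [] [Meth MH None])"
    and ok_ts: "\<forall>i<length ts. body_ok L Ds' (TN (ts ! i)) (Body False [] (Mss ! i))"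
  shows "body_ok L Ds' (CN C) B"
proof -
  have traits: "\<forall>t\<in>set (t0 # ts).
      plain_trait Ds' t \<and> body_ok L Ds' (TN t) (Body False [] (methods_of Ds' (TN t)))"
  proof
    fix t assume "t \<in> set (t0 # ts)"
    then obtain Ms where "map_of Ds (TN t) = Some (TBody (Body False [] Ms))"
      and "map_of Ds' (TN t) = Some (TBody (Body False [] Ms))"
      and "body_ok L Ds' (TN t) (Body False [] Ms)"
      using D_t0 F_t0 ok_t0 D_ts F_ts ok_ts by (auto simp: in_set_conv_nth)
    then show "plain_trait Ds' t \<and> body_ok L Ds' (TN t) (Body False [] (methods_of Ds' (TN t)))"
      using wf_prog_distinct_mnm[OF wf] plain_traitI methods_of_TBody by fastforce
  qed
  have "flat_e L Ds' (CN C) (foldl TPlus (TRef t0) (map TRef ts)) = Some B"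
    using flattens_map_of[OF flat _ D_C F_C] wf by (simp add: wf_prog_def)
  then have "merges L Ds' (map (\<lambda>t. methods_of Ds' (TN t)) (t0 # ts)) (bmeths B)"
    using flat_e_trait_sum[OF logic] traits by blast
  moreover have "body_of Ds' (CN C) = Some B"
    using F_C by (simp add: body_of_def)
  ultimately show ?thesis
    using body_ok_merge[OF logic] traits by blast
qed

end
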